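(* Let $\gamma$ be an even probability density on $\mathbb{R}$ which is positive in a neighbourhood of the origin, and let $\mathcal{P}^n_\gamma$ be the associated sub-spherical family on $\mathbb{R}^n$. Let $x\mapsto Qx:\mathbb{R}^n\to\mathbb{R}^m$ be a linear mapping which is onto and satisfies $QQ^T\preceq I_m$. Then whenever $p\in\mathcal{P}^n_\gamma$, the distribution of the random vector $Q\xi$, $\xi\sim p$, belongs to $\mathcal{P}^m_\gamma$. Moreover, if $QQ^T=I_m$ and $\mathcal{P}^n_\gamma$ has a cap $q$, then $\mathcal{P}^m_\gamma$ has a cap as well, namely the density of the random vector $Q\xi$, $\xi\sim q$.
   Context: For an even probability density $\gamma$ on $\mathbb{R}$ positive in a neighbourhood of $0$, set $P_\gamma(\delta)=\int_\delta^\infty\gamma(s)\,ds$. The sub-spherical family $\mathcal{P}^n_\gamma$ is the set of all probability densities $p$ on $\mathbb{R}^n$ (w.r.t. Lebesgue measure) such that $p$ is even ($p(-\xi)=p(\xi)$) and for every unit vector $e\in\mathbb{R}^n$ ($\|e\|_2=1$) and every $\delta\ge 0$, $\int_{\{\xi:e^T\xi\ge\delta\}}p(\xi)\,d\xi\le P_\gamma(\delta)$. A cap of $\mathcal{P}^n_\gamma$ is a density $q\in\mathcal{P}^n_\gamma$ of the form $q(\xi)=f(\|\xi\|_2)$ with $f$ nonincreasing on $[0,\infty)$, such that for every unit vector $e$ the density of the scalar random variable $e^T\xi$, $\xi\sim q$, is exactly $\gamma$. $A\preceq B$ means $B-A$ is positive semidefinite. *)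

theory Defs
  imports "HOL-Analysis.Analysis"
begin

definition admissible_gamma :: "(real \<Rightarrow> real) \<Rightarrow> bool" where
  "admissible_gamma \<gamma> \<longleftrightarrow>
     \<gamma> \<in> borel_measurable lborel \<and> (\<forall>s. 0 \<le> \<gamma> s) \<and>
     (\<integral>\<^sup>+ s. ennreal (\<gamma> s) \<partial>lborel) = 1 \<and>
     (\<forall>s. \<gamma> (- s) = \<gamma> s) \<and>
     (\<exists>\<epsilon>>0. \<forall>s. \<bar>s\<bar> < \<epsilon> \<longrightarrow> 0 < \<gamma> s)"

definition tailP :: "(real \<Rightarrow> real) \<Rightarrow> real \<Rightarrow> real" where
  "tailP \<gamma> \<delta> = (\<integral>s\<in>{\<delta>..}. \<gamma> s \<partial>lborel)"

definition prob_density :: "('a::euclidean_space \<Rightarrow> real) \<Rightarrow> bool" where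
  "prob_density p \<longleftrightarrow> p \<in> borel_measurable lborel \<and> (\<forall>x. 0 \<le> p x) \<and>
     (\<integral>\<^sup>+ x. ennreal (p x) \<partial>lborel) = 1"

definition dens_measure :: "('a::euclidean_space \<Rightarrow> real) \<Rightarrow> 'a measure" where
  "dens_measure p = density lborel (\<lambda>x. ennreal (p x))"

definition subspherical :: "(real \<Rightarrow> real) \<Rightarrow> (real^'n \<Rightarrow> real) set" where
  "subspherical \<gamma> = {p. prob_density p \<and> (\<forall>\<xi>. p (- \<xi>) = p \<xi>) \<and>
     (\<forall>e \<delta>. norm e = 1 \<longrightarrow> 0 \<le> \<delta> \<longrightarrow>
        measure (dens_measure p) {\<xi>. e \<bullet> \<xi> \<ge> \<delta>} \<le> tailP \<gamma> \<delta>)}"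

definition is_cap :: "(real \<Rightarrow> real) \<Rightarrow> (real^'n \<Rightarrow> real) \<Rightarrow> bool" where
  "is_cap \<gamma> q \<longleftrightarrow> q \<in> subspherical \<gamma> \<and>
     (\<exists>f::real \<Rightarrow> real. (\<forall>\<xi>. q \<xi> = f (norm \<xi>)) \<and>
        (\<forall>s t. 0 \<le> s \<longrightarrow> s \<le> t \<longrightarrow> f t \<le> f s)) \<and>
     (\<forall>e. norm e = 1 \<longrightarrow> distr (dens_measure q) lborel (\<lambda>\<xi>. e \<bullet> \<xi>) = dens_measure \<gamma>)"

definition loewner_le :: "real^'m^'m \<Rightarrow> real^'m^'m \<Rightarrow> bool" where
  "loewner_le A B \<longleftrightarrow> (\<forall>x. 0 \<le> x \<bullet> ((B - A) *v x))"

end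

theory Submission
  imports Defs
begin

(* A half-space {y. delta <= e . y} of R^m pulls back under Q to the half-space
   {x. delta <= v . x} with v = Q^T e, and Q Q^T <= I together with surjectivity of Q gives
   0 < |v| <= 1, so its mass is at most P_gamma(delta / |v|) <= P_gamma(delta). Surjectivity also
   makes the image measure absolutely continuous; its Radon-Nikodym density, averaged with its
   reflection, is an even member of the family.

   If Q Q^T = I and q(xi) = f(|xi|), the image density at y is an integral of
   f(sqrt(|y|^2 + |w|^2)) over the component w of x in the kernel of Q, hence radial and
   nonincreasing in |y|; its one-dimensional marginals are those of q because
   e . Q x = (Q^T e) . x and |Q^T e| = |e|. It is finite for y <> 0 by integrability and
   monotonicity, and at y = 0 by comparison with its value at a unit vector. *)

lemma matrix_vector_mult_borel_measurable[measurable]: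
  "(\<lambda>x. (A::real^'n^'m) *v x) \<in> borel_measurable borel"
  by (intro borel_measurable_continuous_onI matrix_vector_mult_linear_continuous_on)

lemma matrix_vector_mult_borel_measurable_comp[measurable (raw)]:
  "f \<in> borel_measurable M \<Longrightarrow> (\<lambda>x. (A::real^'n^'m) *v f x) \<in> borel_measurable M"
  using measurable_compose[OF _ matrix_vector_mult_borel_measurable] by blast

lemma vector_matrix_mult_borel_measurable_comp[measurable (raw)]:
  "f \<in> borel_measurable M \<Longrightarrow> (\<lambda>x. f x v* (A::real^'n^'m)) \<in> borel_measurable M"
  using matrix_vector_mult_borel_measurable_comp[of f M "transpose A"] by simp

lemma nn_integral_lborel_affine:
  fixes t :: "'a::euclidean_space" and c :: real and f :: "'a \<Rightarrow> ennreal"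
  assumes [measurable]: "f \<in> borel_measurable borel" and c: "c \<noteq> 0"
  shows "(\<integral>\<^sup>+x. f x \<partial>lborel) = ennreal (\<bar>c\<bar> ^ DIM('a)) * (\<integral>\<^sup>+x. f (t + c *\<^sub>R x) \<partial>lborel)"
  by (subst lborel_affine[OF c, of t]) (simp add: nn_integral_density nn_integral_distr nn_integral_cmult)

lemma nn_integral_lborel_translate:
  fixes c :: "'a::euclidean_space"
  assumes "g \<in> borel_measurable borel" and "\<And>x. f x = g (x + c)"
  shows "(\<integral>\<^sup>+x. f x \<partial>lborel) = (\<integral>\<^sup>+x. g x \<partial>lborel)"
  using nn_integral_lborel_affine[OF assms(1), of 1 c] assms(2) by (simp add: add.commute)

lemma nn_integral_lborel_reflect:
  fixes f :: "'a::euclidean_space \<Rightarrow> ennreal"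
  assumes "f \<in> borel_measurable borel"
  shows "(\<integral>\<^sup>+x. f (- x) \<partial>lborel) = (\<integral>\<^sup>+x. f x \<partial>lborel)"
  using nn_integral_lborel_affine[OF assms, of "-1" 0] by simp

lemma emeasure_distr_density_lborel:
  fixes T :: "'a::euclidean_space \<Rightarrow> 'b::euclidean_space"
  assumes [measurable]: "g \<in> borel_measurable borel" "T \<in> borel_measurable borel" "A \<in> sets borel"
  shows "emeasure (distr (density lborel g) lborel T) A = (\<integral>\<^sup>+x. g x * indicator A (T x) \<partial>lborel)"
  by (simp add: emeasure_distr emeasure_density indicator_def[abs_def] vimage_def)

lemma distr_density_lborel_reflect:
  fixes g :: "'a::euclidean_space \<Rightarrow> ennreal"
  assumes [measurable]: "g \<in> borel_measurable borel"
  shows "distr (density lborel g) lborel uminus = density lborel (\<lambda>x. g (- x))"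
proof -
  have "distr lborel borel uminus = (lborel :: 'a measure)"
    using lborel_affine[of "-1" "0::'a"] by (simp add: density_1)
  moreover have "distr (density lborel g) lborel uminus = distr (density lborel g) borel uminus"
    by (rule distr_cong) auto
  ultimately show ?thesis
    using density_distr[of "\<lambda>x. g (- x)" borel uminus lborel] by simp
qed

lemma density_midpoint:
  assumes [measurable]: "f \<in> borel_measurable M" "g \<in> borel_measurable M"
    and eq: "density M g = density M f"
  shows "density M (\<lambda>x. (f x + g x) / 2) = density M f"
proof (rule measure_eqI)
  fix A assume "A \<in> sets (density M (\<lambda>x. (f x + g x) / 2))"
  then have A: "A \<in> sets M" by simp
  have "emeasure (density M (\<lambda>x. (f x + g x) / 2)) A = (\<integral>\<^sup>+x. (f x + g x) * indicator A x \<partial>M) / 2"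
    using A by (simp add: emeasure_density divide_ennreal_def nn_integral_cmult[symmetric] mult_ac)
  also have "(\<integral>\<^sup>+x. (f x + g x) * indicator A x \<partial>M) = emeasure (density M f) A + emeasure (density M g) A"
    using emeasure_density_add[OF A, of f g] A by (simp add: emeasure_density)
  also have "\<dots> = 2 * emeasure (density M f) A"
    by (simp add: eq mult_2)
  finally show "emeasure (density M (\<lambda>x. (f x + g x) / 2)) A = emeasure (density M f) A"
    by (simp add: mult.commute[of 2] ennreal_mult_divide_eq)
qed simp

lemma null_sets_surj_matrix_vimage:
  fixes Q :: "real^'n^'m"
  assumes sur: "surj (\<lambda>x. Q *v x)" and N: "N \<in> null_sets lborel"
  shows "(\<lambda>x. Q *v x) -` N \<in> null_sets lborel"
proof -
  obtain B :: "real^'m^'n" where B: "Q ** B = mat 1"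
    using sur matrix_right_invertible_surjective by blast
  define A where "A = (\<lambda>x. Q *v x) -` N"
  have [measurable]: "N \<in> sets borel" using N by auto
  have A[measurable]: "A \<in> sets borel"
    unfolding A_def using measurable_sets[OF matrix_vector_mult_borel_measurable, of N Q] by simp
  \<comment> \<open>Fubini for \<open>(x, y) \<mapsto> 1\<^sub>A(x + B y)\<close>: integrating in \<open>x\<close> gives the measure of \<open>A\<close>
     for every \<open>y\<close>, integrating in \<open>y\<close> gives the measure of \<open>N\<close>, i.e. 0, for every \<open>x\<close>.\<close>
  have "(\<lambda>z::(real^'n) \<times> (real^'m). fst z + B *v snd z) \<in> borel_measurable (lborel \<Otimes>\<^sub>M lborel)"
    by measurable
  then have "(\<lambda>z. indicator A (fst z + B *v snd z) :: ennreal) \<in> borel_measurable (lborel \<Otimes>\<^sub>M lborel)"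
    by (rule measurable_compose[OF _ borel_measurable_indicator[OF A]])
  then have Fubini: "(\<integral>\<^sup>+y. \<integral>\<^sup>+x. indicator A (x + B *v y) \<partial>lborel \<partial>lborel)
      = (\<integral>\<^sup>+x. \<integral>\<^sup>+y. indicator A (x + B *v y) \<partial>lborel \<partial>(lborel :: (real^'n) measure))"
    by (intro lborel_pair.Fubini') (simp add: case_prod_beta)
  have "(\<integral>\<^sup>+x. indicator A (x + B *v y) \<partial>lborel) = emeasure lborel A" for y
    using nn_integral_lborel_translate[of "indicator A" "\<lambda>x. indicator A (x + B *v y)" "B *v y"] by simp
  moreover have "(\<integral>\<^sup>+y. indicator A (x + B *v y) \<partial>lborel) = 0" for x
  proof -
    have "(\<integral>\<^sup>+y. indicator A (x + B *v y) \<partial>lborel) = (\<integral>\<^sup>+y. indicator N (y + Q *v x) \<partial>lborel)"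
      by (intro nn_integral_cong)
         (simp add: A_def indicator_def matrix_vector_right_distrib matrix_vector_mul_assoc B add_ac)
    also have "\<dots> = emeasure lborel N"
      using nn_integral_lborel_translate[of "indicator N" "\<lambda>y. indicator N (y + Q *v x)" "Q *v x"] by simp
    finally show ?thesis using null_setsD1[OF N] by simp
  qed
  ultimately have "emeasure lborel A * \<infinity> = 0"
    using Fubini by simp
  then have "emeasure lborel A = 0"
  proof (rule contrapos_pp)
    assume "emeasure lborel A \<noteq> 0"
    then show "emeasure lborel A * \<infinity> \<noteq> 0" by (simp add: ennreal_mult_top)
  qed
  then show ?thesis
    using A unfolding A_def by (intro null_setsI) simp_all
qed

lemma absolutely_continuous_distr_surj_matrix:
  fixes Q :: "real^'n^'m"
  assumes sur: "surj (\<lambda>x. Q *v x)" and [measurable]: "g \<in> borel_measurable borel"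
  shows "absolutely_continuous lborel (distr (density lborel g) lborel (\<lambda>x. Q *v x))"
  unfolding absolutely_continuous_def
proof
  fix N assume N: "N \<in> null_sets (lborel :: (real^'m) measure)"
  have "(\<lambda>x. Q *v x) -` N \<in> null_sets (density lborel g)"
    using null_sets_surj_matrix_vimage[OF sur N] absolutely_continuousI_density[of g lborel]
    unfolding absolutely_continuous_def by auto
  then show "N \<in> null_sets (distr (density lborel g) lborel (\<lambda>x. Q *v x))"
    using N by (subst null_sets_distr_iff) auto
qed

lemma sigma_finite_absolutely_continuous_real_density:
  fixes N :: "'a::euclidean_space measure"
  assumes "sigma_finite_measure N" and sets: "sets N = sets lborel"
    and ac: "absolutely_continuous lborel N"
  obtains q :: "'a \<Rightarrow> real"
  where "q \<in> borel_measurable borel" "\<And>x. 0 \<le> q x" "N = density lborel (\<lambda>x. ennreal (q x))"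
proof
  let ?g = "RN_deriv lborel N"
  have "AE x in lborel. ?g x \<noteq> \<infinity>"
    by (rule sigma_finite_measure.RN_deriv_finite[OF sigma_finite_lborel assms(1) ac sets])
  then have "AE x in lborel. ?g x = ennreal (enn2real (?g x))"
    by eventually_elim (simp add: less_top)
  then have "density lborel ?g = density lborel (\<lambda>x. ennreal (enn2real (?g x)))"
    by (intro density_cong) auto
  then show "N = density lborel (\<lambda>x. ennreal (enn2real (?g x)))"
    using sigma_finite_measure.density_RN_deriv[OF sigma_finite_lborel ac sets] by simp
qed auto

lemma tailP_antimono:
  assumes "admissible_gamma \<gamma>" "a \<le> b"
  shows "tailP \<gamma> b \<le> tailP \<gamma> a"
proof -
  have "integrable lborel \<gamma>" and nn: "\<And>s. 0 \<le> \<gamma> s"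
    using assms(1) unfolding admissible_gamma_def by (auto intro: integrableI_nonneg)
  then show ?thesis
    unfolding tailP_def set_lebesgue_integral_def using assms(2)
    by (intro integral_mono integrable_mult_indicator) (auto split: split_indicator)
qed

lemma subspherical_halfspace_le:
  assumes ga: "admissible_gamma \<gamma>" and p: "p \<in> subspherical \<gamma>"
    and v: "v \<noteq> 0" "norm v \<le> 1" and \<delta>: "0 \<le> \<delta>"
  shows "measure (dens_measure p) {x. \<delta> \<le> v \<bullet> x} \<le> tailP \<gamma> \<delta>"
proof -
  have tail: "\<And>e \<delta>. norm e = 1 \<Longrightarrow> 0 \<le> \<delta> \<Longrightarrow> measure (dens_measure p) {x. \<delta> \<le> e \<bullet> x} \<le> tailP \<gamma> \<delta>"
    using p unfolding subspherical_def by blast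
  have n: "0 < norm v" using v by simp
  have "{x. \<delta> \<le> v \<bullet> x} = {x. \<delta> / norm v \<le> (v /\<^sub>R norm v) \<bullet> x}"
  proof (rule Collect_cong)
    fix x
    have "(v /\<^sub>R norm v) \<bullet> x = (v \<bullet> x) / norm v"
      by (simp add: divide_inverse_commute)
    then show "\<delta> \<le> v \<bullet> x \<longleftrightarrow> \<delta> / norm v \<le> (v /\<^sub>R norm v) \<bullet> x"
      using n by (simp add: divide_le_cancel)
  qed
  also have "measure (dens_measure p) \<dots> \<le> tailP \<gamma> (\<delta> / norm v)"
    using n \<delta> by (intro tail) simp_all
  also have "\<dots> \<le> tailP \<gamma> \<delta>"
    using n v(2) \<delta> by (intro tailP_antimono[OF ga]) (simp add: le_divide_eq mult_left_le)
  finally show ?thesis .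
qed

lemma norm_vector_matrix_le:
  fixes Q :: "real^'n^'m"
  assumes "loewner_le (Q ** transpose Q) (mat 1)"
  shows "norm (e v* Q) \<le> norm e"
proof -
  have "(e v* Q) \<bullet> (e v* Q) = e \<bullet> (Q *v (transpose Q *v e))"
    by (simp add: dot_lmul_matrix)
  also have "\<dots> = e \<bullet> ((Q ** transpose Q) *v e)"
    by (simp only: matrix_vector_mul_assoc)
  also have "\<dots> \<le> e \<bullet> e"
    using assms unfolding loewner_le_def
    by (metis diff_ge_0_iff_ge inner_diff_right matrix_vector_mul_lid matrix_vector_mult_diff_rdistrib)
  finally have "norm (e v* Q) ^ 2 \<le> norm e ^ 2"
    by (simp add: power2_norm_eq_inner)
  then show ?thesis
    by (rule power2_le_imp_le) simp
qed

lemma vector_matrix_nonzero_if_surj: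
  fixes Q :: "real^'n^'m"
  assumes "surj (\<lambda>x. Q *v x)" "e \<noteq> 0"
  shows "e v* Q \<noteq> 0"
proof
  assume "e v* Q = 0"
  obtain w where "Q *v w = e" using assms(1) by (metis surjD)
  then have "e \<bullet> e = (e v* Q) \<bullet> w"
    by (simp add: dot_lmul_matrix)
  with \<open>e v* Q = 0\<close> assms(2) show False by simp
qed

lemma matrix_vector_mult_uminus: "(Q::real^'n^'m) *v (- x) = - (Q *v x)"
  by (rule linear_neg[OF matrix_vector_mul_linear])

lemma distr_uminus_dens_measure_even:
  fixes p :: "'a::euclidean_space \<Rightarrow> real"
  assumes "p \<in> borel_measurable borel" "\<And>x. p (- x) = p x"
  shows "distr (dens_measure p) lborel uminus = dens_measure p"
  using distr_density_lborel_reflect[of "\<lambda>x. ennreal (p x)"] assms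
  unfolding dens_measure_def by simp

lemma distr_matrix_reflection_invariant:
  fixes Q :: "real^'n^'m" and p :: "real^'n \<Rightarrow> real"
  assumes [measurable]: "p \<in> borel_measurable borel" and even: "\<And>x. p (- x) = p x"
  shows "distr (distr (dens_measure p) lborel (\<lambda>x. Q *v x)) lborel uminus
       = distr (dens_measure p) lborel (\<lambda>x. Q *v x)"
proof -
  have "distr (distr (dens_measure p) lborel (\<lambda>x. Q *v x)) lborel uminus
      = distr (dens_measure p) lborel (\<lambda>x. Q *v (- x))"
    unfolding dens_measure_def by (subst distr_distr) (simp_all add: comp_def matrix_vector_mult_uminus)
  also have "\<dots> = distr (distr (dens_measure p) lborel uminus) lborel (\<lambda>x. Q *v x)"
    unfolding dens_measure_def by (subst distr_distr) (simp_all add: comp_def)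
  also have "\<dots> = distr (dens_measure p) lborel (\<lambda>x. Q *v x)"
    by (simp add: distr_uminus_dens_measure_even even)
  finally show ?thesis .
qed

lemma measure_distr_matrix_halfspace:
  fixes Q :: "real^'n^'m" and p :: "real^'n \<Rightarrow> real"
  shows "measure (distr (dens_measure p) lborel (\<lambda>x. Q *v x)) {y. \<delta> \<le> e \<bullet> y}
       = measure (dens_measure p) {x. \<delta> \<le> (e v* Q) \<bullet> x}"
proof -
  have "{y. \<delta> \<le> e \<bullet> y} \<in> sets lborel" by measurable
  then show ?thesis
    by (subst measure_distr) (auto simp: dens_measure_def dot_lmul_matrix vimage_def)
qed

lemma distr_inner_distr_matrix:
  fixes Q :: "real^'n^'m" and p :: "real^'n \<Rightarrow> real"
  shows "distr (distr (dens_measure p) lborel (\<lambda>x. Q *v x)) lborel (\<lambda>y. e \<bullet> y)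
       = distr (dens_measure p) lborel (\<lambda>x. (e v* Q) \<bullet> x)"
proof -
  have "(\<lambda>x. (e v* Q) \<bullet> x) = (\<lambda>x. e \<bullet> (Q *v x))"
    by (simp add: dot_lmul_matrix)
  then show ?thesis
    by (subst distr_distr) (simp_all add: dens_measure_def comp_def)
qed

lemma distr_matrix_subspherical:
  fixes Q :: "real^'n^'m" and p :: "real^'n \<Rightarrow> real" and p' :: "real^'m \<Rightarrow> real"
  assumes ga: "admissible_gamma \<gamma>" and sur: "surj (\<lambda>x. Q *v x)"
    and le: "loewner_le (Q ** transpose Q) (mat 1)" and p: "p \<in> subspherical \<gamma>"
    and p'[measurable]: "p' \<in> borel_measurable borel"
    and p'_nonneg: "\<And>y. 0 \<le> p' y" and p'_even: "\<And>y. p' (- y) = p' y"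
    and eq: "distr (dens_measure p) lborel (\<lambda>x. Q *v x) = dens_measure p'"
  shows "p' \<in> subspherical \<gamma>"
proof -
  have [measurable]: "p \<in> borel_measurable borel" and p1: "(\<integral>\<^sup>+x. ennreal (p x) \<partial>lborel) = 1"
    using p unfolding subspherical_def prob_density_def by auto
  have "(\<integral>\<^sup>+y. ennreal (p' y) \<partial>lborel) = emeasure (dens_measure p') UNIV"
    by (simp add: dens_measure_def emeasure_density)
  also have "\<dots> = (\<integral>\<^sup>+x. ennreal (p x) \<partial>lborel)"
    unfolding eq[symmetric] by (simp add: dens_measure_def emeasure_distr_density_lborel)
  finally have "prob_density p'"
    unfolding prob_density_def using p'_nonneg p1 by simp
  moreover have "measure (dens_measure p') {y. \<delta> \<le> e \<bullet> y} \<le> tailP \<gamma> \<delta>"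
    if e: "norm e = 1" and \<delta>: "0 \<le> \<delta>" for e \<delta>
  proof -
    have "e \<noteq> 0" using e by auto
    then show ?thesis
      unfolding eq[symmetric] measure_distr_matrix_halfspace
      using e \<delta> norm_vector_matrix_le[OF le, of e] vector_matrix_nonzero_if_surj[OF sur, of e]
      by (intro subspherical_halfspace_le[OF ga p]) auto
  qed
  ultimately show ?thesis
    using p'_even unfolding subspherical_def by auto
qed

lemma dens_measure_symmetrize:
  fixes q :: "'a::euclidean_space \<Rightarrow> real"
  assumes [measurable]: "q \<in> borel_measurable borel" and q0: "\<And>y. 0 \<le> q y"
    and invariant: "distr (dens_measure q) lborel uminus = dens_measure q"
  shows "dens_measure (\<lambda>y. (q y + q (- y)) / 2) = dens_measure q"
proof -
  have "density lborel (\<lambda>y. ennreal (q (- y))) = density lborel (\<lambda>y. ennreal (q y))"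
    using distr_density_lborel_reflect[of "\<lambda>x. ennreal (q x)"] invariant by (simp add: dens_measure_def)
  then have "density lborel (\<lambda>y. (ennreal (q y) + ennreal (q (- y))) / 2) = dens_measure q"
    unfolding dens_measure_def by (intro density_midpoint) simp_all
  moreover have "ennreal ((q y + q (- y)) / 2) = (ennreal (q y) + ennreal (q (- y))) / 2" for y
    using q0 by (simp add: divide_ennreal[symmetric])
  ultimately show ?thesis
    by (simp add: dens_measure_def)
qed

lemma distr_matrix_has_subspherical_density:
  fixes Q :: "real^'n^'m" and p :: "real^'n \<Rightarrow> real"
  assumes ga: "admissible_gamma \<gamma>" and sur: "surj (\<lambda>x. Q *v x)"
    and le: "loewner_le (Q ** transpose Q) (mat 1)" and p: "p \<in> subspherical \<gamma>"
  shows "\<exists>p' \<in> subspherical \<gamma>. distr (dens_measure p) lborel (\<lambda>x. Q *v x) = dens_measure p'"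
proof -
  have [measurable]: "p \<in> borel_measurable borel" and p1: "(\<integral>\<^sup>+x. ennreal (p x) \<partial>lborel) = 1"
    and even: "\<And>x. p (- x) = p x"
    using p unfolding subspherical_def prob_density_def by auto
  define M where "M = distr (dens_measure p) lborel (\<lambda>x. Q *v x)"
  have sets_M: "sets M = sets lborel" by (simp add: M_def)
  have "emeasure M (space M) = 1"
    using p1 by (simp add: M_def dens_measure_def emeasure_distr_density_lborel)
  then interpret M: finite_measure M
    by (intro finite_measureI) simp
  obtain q where q[measurable]: "q \<in> borel_measurable borel" and q0: "\<And>y. 0 \<le> q y"
    and M_q: "M = dens_measure q"
    using sigma_finite_absolutely_continuous_real_density[OF M.sigma_finite_measure_axioms sets_M]
      absolutely_continuous_distr_surj_matrix[OF sur, of "\<lambda>x. ennreal (p x)"]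
    unfolding M_def dens_measure_def by auto
  define p' where "p' y = (q y + q (- y)) / 2" for y
  have [measurable]: "p' \<in> borel_measurable borel"
    unfolding p'_def by measurable
  have "distr (dens_measure q) lborel uminus = dens_measure q"
    unfolding M_q[symmetric] M_def by (rule distr_matrix_reflection_invariant) (simp_all add: even)
  then have M_p': "distr (dens_measure p) lborel (\<lambda>x. Q *v x) = dens_measure p'"
    using dens_measure_symmetrize[OF q q0] by (simp add: M_def[symmetric] M_q p'_def[abs_def])
  moreover have "p' \<in> subspherical \<gamma>"
    using M_p' q0 by (intro distr_matrix_subspherical[OF ga sur le p]) (simp_all add: p'_def)
  ultimately show ?thesis
    by blast
qed

lemma emeasure_lborel_unit_cube: "emeasure lborel (cbox (0::real^'m) 1) = 1"
  by (subst emeasure_lborel_cbox_eq) (auto simp: Basis_vec_def inner_axis intro!: prod.neutral)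

lemma norm_le_card_if_mem_unit_cube:
  fixes z :: "real^'m"
  assumes "z \<in> cbox 0 1"
  shows "norm z \<le> real CARD('m)"
proof -
  have "\<bar>z $ i\<bar> \<le> 1" for i
    using assms by (simp add: mem_box_cart)
  then show ?thesis
    using norm_le_l1_cart[of z] sum_bounded_above[of UNIV "\<lambda>i. \<bar>z $ i\<bar>" 1] by simp
qed

lemma half_mem_unit_cube:
  fixes z :: "real^'m"
  assumes "z \<in> cbox 0 1"
  shows "(1/2) *\<^sub>R z \<in> cbox 0 1"
  using assms by (auto simp: mem_box_cart intro: order.trans[OF _ one_le_numeral])

lemma radial_antimono_finite:
  fixes G :: "'a::euclidean_space \<Rightarrow> ennreal"
  assumes radial: "\<And>z. G z = H (norm z)" and antimono: "\<And>s t. 0 \<le> s \<Longrightarrow> s \<le> t \<Longrightarrow> H t \<le> H s"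
    and finite: "(\<integral>\<^sup>+z. G z \<partial>lborel) < \<infinity>" and r: "0 < r"
  shows "H r < \<infinity>"
proof (rule ccontr)
  assume "\<not> H r < \<infinity>"
  then have "H r = \<infinity>"
    by (simp add: not_less top_unique)
  then have le: "\<infinity> * indicator (cball 0 r) z \<le> G z" for z
    using antimono[of "norm z" r] by (auto simp: radial top_unique split: split_indicator)
  have "(\<integral>\<^sup>+z. \<infinity> * indicator (cball (0::'a) r) z \<partial>lborel) \<le> (\<integral>\<^sup>+z. G z \<partial>lborel)"
    by (rule nn_integral_mono) (rule le)
  moreover have "unit_ball_vol (real DIM('a)) \<noteq> 0"
    using unit_ball_vol_pos[OF of_nat_0_le_iff] by (metis less_irrefl)
  then have "emeasure lborel (cball (0::'a) r) \<noteq> 0"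
    using r by (simp add: emeasure_cball)
  then have "(\<integral>\<^sup>+z. \<infinity> * indicator (cball (0::'a) r) z \<partial>lborel) = \<infinity>"
    by (simp add: nn_integral_cmult_indicator ennreal_mult_top)
  ultimately show False
    using finite by (simp add: top_unique)
qed

locale orthonormal_rows =
  fixes Q :: "real^'n^'m"
  assumes orthonormal: "Q ** transpose Q = mat 1"
begin

lemma matrix_vector_vector_matrix[simp]: "Q *v (y v* Q) = y"
proof -
  have "Q *v (transpose Q *v y) = y"
    by (simp only: matrix_vector_mul_assoc orthonormal matrix_vector_mul_lid)
  then show ?thesis by simp
qed

lemma surj_matrix_vector: "surj (\<lambda>x. Q *v x)"
  by (rule surjI[of _ "\<lambda>y. y v* Q"]) simp

lemma loewner_le_orthonormal: "loewner_le (Q ** transpose Q) (mat 1)"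
  unfolding loewner_le_def orthonormal by simp

definition kernel_proj where
  "kernel_proj x = x - (Q *v x) v* Q"

lemma kernel_proj_borel_measurable[measurable (raw)]:
  "f \<in> borel_measurable M \<Longrightarrow> (\<lambda>x. kernel_proj (f x)) \<in> borel_measurable M"
  unfolding kernel_proj_def
  by (intro borel_measurable_diff vector_matrix_mult_borel_measurable_comp matrix_vector_mult_borel_measurable_comp)

lemma matrix_vector_kernel_proj[simp]: "Q *v kernel_proj x = 0"
  by (simp add: kernel_proj_def matrix_vector_mult_diff_distrib)

lemma kernel_proj_add_vector_matrix[simp]: "kernel_proj (x + y v* Q) = kernel_proj x"
  by (simp add: kernel_proj_def matrix_vector_right_distrib vector_matrix_left_distrib)

lemma kernel_proj_scaleR[simp]: "kernel_proj (c *\<^sub>R x) = c *\<^sub>R kernel_proj x"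
  by (simp add: kernel_proj_def matrix_vector_mult_scaleR scaleR_vector_matrix_assoc scaleR_diff_right)

lemma kernel_proj_decomposition: "kernel_proj x + (Q *v x) v* Q = x"
  by (simp add: kernel_proj_def)

lemma norm_vector_matrix_add_kernel:
  assumes "Q *v z = 0"
  shows "norm (y v* Q + z) = sqrt ((norm y)\<^sup>2 + (norm z)\<^sup>2)"
proof -
  have "(y v* Q) \<bullet> (y v* Q) = y \<bullet> y" "(y v* Q) \<bullet> z = 0"
    using assms by (simp_all add: dot_lmul_matrix)
  then have "(norm (y v* Q + z))\<^sup>2 = (norm y)\<^sup>2 + (norm z)\<^sup>2"
    by (simp add: power2_norm_eq_inner inner_add_left inner_add_right inner_commute)
  then show ?thesis
    by (simp add: real_sqrt_unique)
qed

lemma norm_vector_matrix[simp]: "norm (y v* Q) = norm y"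
  using norm_vector_matrix_add_kernel[of 0 y] by simp

text \<open>Instead of integrating over the fibre \<open>Q x = y\<close>, which would need a parametrisation of the
  kernel of \<open>Q\<close>, integrate over all \<open>x\<close> with \<open>Q x\<close> in the unit cube (of volume 1) and move
  \<open>x\<close> into the fibre by \<open>x \<mapsto> y v* Q + kernel_proj x\<close>.\<close>

definition marginal :: "(real^'n \<Rightarrow> real) \<Rightarrow> real^'m \<Rightarrow> ennreal" where
  "marginal q y = (\<integral>\<^sup>+x. ennreal (q (y v* Q + kernel_proj x)) * indicator (cbox 0 1) (Q *v x) \<partial>lborel)"

lemma marginal_borel_measurable[measurable]:
  assumes [measurable]: "q \<in> borel_measurable borel"
  shows "marginal q \<in> borel_measurable borel"
proof -
  have [measurable]: "cbox (0::real^'m) 1 \<in> sets borel" by simp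
  show ?thesis
    unfolding marginal_def[abs_def] by measurable
qed

lemma density_marginal:
  assumes [measurable]: "q \<in> borel_measurable borel"
  shows "density lborel (marginal q) = distr (density lborel (\<lambda>x. ennreal (q x))) lborel (\<lambda>x. Q *v x)"
proof (rule measure_eqI)
  fix A assume "A \<in> sets (density lborel (marginal q))"
  then have A[measurable]: "A \<in> sets borel" by simp
  define B where "B = cbox (0::real^'m) 1"
  have B[measurable]: "B \<in> sets borel" unfolding B_def by simp
  define E where "E = (\<integral>\<^sup>+x. ennreal (q x) * indicator A (Q *v x) \<partial>lborel)"
  have shift_x: "(\<integral>\<^sup>+x. ennreal (q (y v* Q + kernel_proj x)) * indicator B (Q *v x) * indicator A y \<partial>lborel)
      = (\<integral>\<^sup>+x. ennreal (q (y v* Q + kernel_proj x)) * indicator B (Q *v x - y) * indicator A y \<partial>lborel)" for y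
    by (rule nn_integral_lborel_translate[where c = "y v* Q"]) (measurable, simp add: matrix_vector_right_distrib)
  have shift_y: "(\<integral>\<^sup>+y. ennreal (q (y v* Q + kernel_proj x)) * indicator B (Q *v x - y) * indicator A y \<partial>lborel)
      = (\<integral>\<^sup>+y. ennreal (q (y v* Q + x)) * indicator B (- y) * indicator A (y + Q *v x) \<partial>lborel)" for x
    by (rule nn_integral_lborel_translate[where c = "- (Q *v x)"])
       (measurable, simp add: vector_matrix_left_distrib kernel_proj_def algebra_simps)
  have shift_x': "(\<integral>\<^sup>+x. ennreal (q (y v* Q + x)) * indicator B (- y) * indicator A (y + Q *v x) \<partial>lborel)
      = (\<integral>\<^sup>+x. ennreal (q x) * indicator B (- y) * indicator A (Q *v x) \<partial>lborel)" for y
    by (rule nn_integral_lborel_translate[where c = "- (y v* Q)", symmetric])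
       (measurable, simp add: matrix_vector_right_distrib algebra_simps)
  have "emeasure (density lborel (marginal q)) A = (\<integral>\<^sup>+y. marginal q y * indicator A y \<partial>lborel)"
    by (rule emeasure_density) measurable
  also have "\<dots> = (\<integral>\<^sup>+y. \<integral>\<^sup>+x. ennreal (q (y v* Q + kernel_proj x)) * indicator B (Q *v x) * indicator A y \<partial>lborel \<partial>lborel)"
    unfolding marginal_def B_def by (intro nn_integral_cong nn_integral_multc[symmetric]) measurable
  also have "\<dots> = (\<integral>\<^sup>+y. \<integral>\<^sup>+x. ennreal (q (y v* Q + kernel_proj x)) * indicator B (Q *v x - y) * indicator A y \<partial>lborel \<partial>lborel)"
    by (intro nn_integral_cong shift_x)
  also have "\<dots> = (\<integral>\<^sup>+x. \<integral>\<^sup>+y. ennreal (q (y v* Q + kernel_proj x)) * indicator B (Q *v x - y) * indicator A y \<partial>lborel \<partial>lborel)"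
    by (rule lborel_pair.Fubini') measurable
  also have "\<dots> = (\<integral>\<^sup>+x. \<integral>\<^sup>+y. ennreal (q (y v* Q + x)) * indicator B (- y) * indicator A (y + Q *v x) \<partial>lborel \<partial>lborel)"
    by (intro nn_integral_cong shift_y)
  also have "\<dots> = (\<integral>\<^sup>+y. \<integral>\<^sup>+x. ennreal (q (y v* Q + x)) * indicator B (- y) * indicator A (y + Q *v x) \<partial>lborel \<partial>lborel)"
    by (rule lborel_pair.Fubini'[symmetric]) measurable
  also have "\<dots> = (\<integral>\<^sup>+y. indicator B (- y) * E \<partial>lborel)"
    unfolding shift_x' E_def
    by (intro nn_integral_cong) (simp add: nn_integral_cmult[symmetric] mult_ac)
  also have "\<dots> = (\<integral>\<^sup>+y. indicator B (- y) \<partial>lborel) * E"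
    by (rule nn_integral_multc) measurable
  also have "(\<integral>\<^sup>+y. indicator B (- y) \<partial>lborel) = 1"
    using nn_integral_lborel_reflect[of "indicator B"] emeasure_lborel_unit_cube unfolding B_def by simp
  also have "E = emeasure (distr (density lborel (\<lambda>x. ennreal (q x))) lborel (\<lambda>x. Q *v x)) A"
    unfolding E_def by (rule emeasure_distr_density_lborel[symmetric]) measurable
  finally show "emeasure (density lborel (marginal q)) A
      = emeasure (distr (density lborel (\<lambda>x. ennreal (q x))) lborel (\<lambda>x. Q *v x)) A"
    by simp
qed simp

definition radial_marginal :: "(real \<Rightarrow> real) \<Rightarrow> real \<Rightarrow> ennreal" where
  "radial_marginal f t =
     (\<integral>\<^sup>+x. ennreal (f (sqrt (t\<^sup>2 + (norm (kernel_proj x))\<^sup>2))) * indicator (cbox 0 1) (Q *v x) \<partial>lborel)"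

lemma marginal_radial:
  assumes "\<And>\<xi>. q \<xi> = f (norm \<xi>)"
  shows "marginal q y = radial_marginal f (norm y)"
  unfolding marginal_def radial_marginal_def
  by (intro nn_integral_cong) (simp add: assms norm_vector_matrix_add_kernel)

lemma radial_marginal_antimono:
  assumes f: "\<And>s t. 0 \<le> s \<Longrightarrow> s \<le> t \<Longrightarrow> f t \<le> f s" and "0 \<le> s" "s \<le> t"
  shows "radial_marginal f t \<le> radial_marginal f s"
  unfolding radial_marginal_def
proof (intro nn_integral_mono mult_right_mono ennreal_leI f)
  show "sqrt (s\<^sup>2 + (norm (kernel_proj x))\<^sup>2) \<le> sqrt (t\<^sup>2 + (norm (kernel_proj x))\<^sup>2)" for x
    using assms(2,3) by (intro real_sqrt_le_mono add_right_mono power_mono) auto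
qed simp_all

text \<open>Where the kernel component \<open>w\<close> of \<open>x\<close> is long, \<open>|y0 v* Q + w/2|\<^sup>2 = 1 + |w|\<^sup>2/4 \<le> |w|\<^sup>2\<close>,
  so the integrand at 0 is dominated by the integrand at \<open>y0\<close> taken at \<open>x/2\<close>.\<close>

lemma marginal_integrand_0_le:
  fixes q :: "real^'n \<Rightarrow> real" and y0 :: "real^'m"
  assumes radial: "\<And>\<xi>. q \<xi> = f (norm \<xi>)" and f: "\<And>s t. 0 \<le> s \<Longrightarrow> s \<le> t \<Longrightarrow> f t \<le> f s"
    and y0: "norm y0 = 1"
  shows "ennreal (q (kernel_proj x)) * indicator (cbox 0 1) (Q *v x)
      \<le> ennreal (q 0) * indicator (cball 0 (2 + real CARD('m))) x
        + ennreal (q (y0 v* Q + kernel_proj ((1/2) *\<^sub>R x))) * indicator (cbox 0 1) (Q *v ((1/2) *\<^sub>R x))"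
proof (cases "Q *v x \<in> cbox 0 1")
  case cube: True
  show ?thesis
  proof (cases "norm (kernel_proj x) < 2")
    case True
    have "norm x \<le> norm (kernel_proj x) + norm ((Q *v x) v* Q)"
      by (metis kernel_proj_decomposition norm_triangle_ineq)
    then have "x \<in> cball 0 (2 + real CARD('m))"
      using True norm_le_card_if_mem_unit_cube[OF cube] by simp
    moreover have "q (kernel_proj x) \<le> q 0"
      by (simp add: radial f)
    ultimately show ?thesis
      using cube by (simp add: ennreal_leI add_increasing2)
  next
    case False
    then have large: "2 \<le> norm (kernel_proj x)"
      by simp
    then have "4 \<le> norm (kernel_proj x) * norm (kernel_proj x)"
      using mult_mono[OF large large] by simp
    then have "sqrt (1 + (norm ((1/2) *\<^sub>R kernel_proj x))\<^sup>2) \<le> norm (kernel_proj x)"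
      by (intro real_le_lsqrt) (auto simp: power2_eq_square)
    then have "q (kernel_proj x) \<le> q (y0 v* Q + kernel_proj ((1/2) *\<^sub>R x))"
      by (simp add: radial f norm_vector_matrix_add_kernel y0 matrix_vector_mult_scaleR)
    moreover have "Q *v ((1/2) *\<^sub>R x) \<in> cbox 0 1"
      using half_mem_unit_cube[OF cube] by (simp add: matrix_vector_mult_scaleR)
    ultimately show ?thesis
      using cube by (simp add: ennreal_leI add_increasing)
  qed
qed simp

lemma marginal_0_le:
  fixes q :: "real^'n \<Rightarrow> real" and y0 :: "real^'m"
  assumes [measurable]: "q \<in> borel_measurable borel" and radial: "\<And>\<xi>. q \<xi> = f (norm \<xi>)"
    and f: "\<And>s t. 0 \<le> s \<Longrightarrow> s \<le> t \<Longrightarrow> f t \<le> f s" and y0: "norm y0 = 1"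
  shows "marginal q 0 \<le> ennreal (q 0) * emeasure lborel (cball (0::real^'n) (2 + real CARD('m)))
                        + 2 ^ CARD('n) * marginal q y0"
proof -
  define R where "R = 2 + real CARD('m)"
  define h where "h x = ennreal (q (y0 v* Q + kernel_proj x)) * indicator (cbox 0 1) (Q *v x)" for x
  have [measurable]: "h \<in> borel_measurable borel"
    unfolding h_def by measurable
  have [measurable]: "cball (0::real^'n) R \<in> sets borel"
    by simp
  have "marginal q 0 \<le> (\<integral>\<^sup>+x. ennreal (q 0) * indicator (cball (0::real^'n) R) x + h ((1/2) *\<^sub>R x) \<partial>lborel)"
    unfolding marginal_def h_def R_def
    by (intro nn_integral_mono) (use marginal_integrand_0_le[of q f y0, OF radial f y0] in simp)
  also have "\<dots> = (\<integral>\<^sup>+x. ennreal (q 0) * indicator (cball (0::real^'n) R) x \<partial>lborel)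
                  + (\<integral>\<^sup>+x. h ((1/2) *\<^sub>R x) \<partial>lborel)"
    by (rule nn_integral_add) measurable
  also have "\<dots> = ennreal (q 0) * emeasure lborel (cball (0::real^'n) R) + (\<integral>\<^sup>+x. h ((1/2) *\<^sub>R x) \<partial>lborel)"
    by (simp add: nn_integral_cmult_indicator)
  also have "(\<integral>\<^sup>+x. h ((1/2) *\<^sub>R x) \<partial>lborel) = 2 ^ CARD('n) * marginal q y0"
    using nn_integral_lborel_affine[of "\<lambda>x. h ((1/2) *\<^sub>R x)" 2 0]
    by (simp add: marginal_def h_def ennreal_power[symmetric])
  finally show ?thesis
    unfolding R_def .
qed

lemma nn_integral_marginal:
  assumes [measurable]: "q \<in> borel_measurable borel"
  shows "(\<integral>\<^sup>+y. marginal q y \<partial>lborel) = (\<integral>\<^sup>+x. ennreal (q x) \<partial>lborel)"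
proof -
  have "(\<integral>\<^sup>+y. marginal q y \<partial>lborel) = emeasure (density lborel (marginal q)) UNIV"
    by (simp add: emeasure_density)
  also have "\<dots> = (\<integral>\<^sup>+x. ennreal (q x) \<partial>lborel)"
    unfolding density_marginal[OF assms] by (simp add: emeasure_distr_density_lborel)
  finally show ?thesis .
qed

lemma radial_marginal_finite:
  fixes q :: "real^'n \<Rightarrow> real"
  assumes [measurable]: "q \<in> borel_measurable borel" and radial: "\<And>\<xi>. q \<xi> = f (norm \<xi>)"
    and f: "\<And>s t. 0 \<le> s \<Longrightarrow> s \<le> t \<Longrightarrow> f t \<le> f s"
    and finite: "(\<integral>\<^sup>+x. ennreal (q x) \<partial>lborel) < \<infinity>" and t: "0 \<le> t"
  shows "radial_marginal f t < \<infinity>"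
proof -
  have pos_finite: "radial_marginal f r < \<infinity>" if "0 < r" for r
  proof (rule radial_antimono_finite[where G = "marginal q"])
    show "marginal q y = radial_marginal f (norm y)" for y
      by (rule marginal_radial[of q f, OF radial])
    show "radial_marginal f t \<le> radial_marginal f s" if "0 \<le> s" "s \<le> t" for s t
      by (rule radial_marginal_antimono[OF f that])
  qed (use finite that in \<open>simp_all add: nn_integral_marginal\<close>)
  obtain y0 :: "real^'m" where y0: "norm y0 = 1"
    using norm_axis_1 by blast
  have "radial_marginal f 0 = marginal q 0"
    by (simp add: marginal_radial[of q f, OF radial])
  also have "\<dots> \<le> ennreal (q 0) * emeasure lborel (cball (0::real^'n) (2 + real CARD('m)))
                  + 2 ^ CARD('n) * marginal q y0"
    by (rule marginal_0_le[of q f y0, OF _ radial f y0]) measurable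
  also have "\<dots> < \<infinity>"
    using pos_finite[of 1] emeasure_lborel_cball_finite[of "0::real^'n"]
    by (simp add: marginal_radial[of q f, OF radial] y0 ennreal_mult_less_top power_less_top_ennreal)
  finally show ?thesis
    using pos_finite[of t] t by (cases "t = 0") simp_all
qed

lemma cap_distr_matrix:
  fixes q :: "real^'n \<Rightarrow> real"
  assumes ga: "admissible_gamma \<gamma>" and cap: "is_cap \<gamma> q"
  shows "\<exists>q'. is_cap \<gamma> q' \<and> distr (dens_measure q) lborel (\<lambda>x. Q *v x) = dens_measure q'"
proof -
  obtain f where qs: "q \<in> subspherical \<gamma>" and radial: "\<And>\<xi>. q \<xi> = f (norm \<xi>)"
    and f: "\<And>s t. 0 \<le> s \<Longrightarrow> s \<le> t \<Longrightarrow> f t \<le> f s"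
    and proj: "\<And>e. norm e = 1 \<Longrightarrow> distr (dens_measure q) lborel (\<lambda>\<xi>. e \<bullet> \<xi>) = dens_measure \<gamma>"
    using cap unfolding is_cap_def by blast
  have [measurable]: "q \<in> borel_measurable borel" and q1: "(\<integral>\<^sup>+x. ennreal (q x) \<partial>lborel) = 1"
    using qs unfolding subspherical_def prob_density_def by auto
  define f' where "f' t = enn2real (radial_marginal f t)" for t
  define q' where "q' \<xi> = f' (norm \<xi>)" for \<xi> :: "real^'m"
  have q'_marginal: "q' y = enn2real (marginal q y)" for y
    by (simp add: q'_def f'_def marginal_radial[of q f, OF radial])
  have "marginal q = (\<lambda>y. ennreal (q' y))"
  proof
    fix y :: "real^'m"
    have "radial_marginal f (norm y) < \<infinity>"
      by (rule radial_marginal_finite[of q f, OF _ radial f]) (use q1 in simp_all)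
    then show "marginal q y = ennreal (q' y)"
      by (simp add: q'_marginal marginal_radial[of q f, OF radial] less_top)
  qed
  then have distr_q': "distr (dens_measure q) lborel (\<lambda>x. Q *v x) = dens_measure q'"
    using density_marginal[of q] by (simp add: dens_measure_def)
  have [measurable]: "q' \<in> borel_measurable borel"
    unfolding q'_marginal[abs_def] by measurable
  show ?thesis
  proof (intro exI conjI)
    show "is_cap \<gamma> q'"
      unfolding is_cap_def
    proof (intro conjI exI[of _ f'] allI impI)
      show "q' \<in> subspherical \<gamma>"
        using distr_q' by (intro distr_matrix_subspherical[OF ga surj_matrix_vector loewner_le_orthonormal qs])
          (simp_all add: q'_def f'_def)
      show "q' \<xi> = f' (norm \<xi>)" for \<xi>
        by (rule q'_def)
      show "f' t \<le> f' s" if "0 \<le> s" "s \<le> t" for s t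
        using radial_marginal_antimono[OF f that] radial_marginal_finite[of q f, OF _ radial f _ that(1)] q1
        unfolding f'_def by (simp add: enn2real_mono)
      show "distr (dens_measure q') lborel (\<lambda>\<xi>. e \<bullet> \<xi>) = dens_measure \<gamma>" if "norm e = 1" for e
        using that unfolding distr_q'[symmetric] distr_inner_distr_matrix by (simp add: proj)
    qed
  qed (rule distr_q')
qed

end

theorem proposition2p2:
  fixes \<gamma> :: "real \<Rightarrow> real" and Q :: "real^'n^'m"
  assumes "admissible_gamma \<gamma>"
    and "surj (\<lambda>x. Q *v x)"
    and "loewner_le (Q ** transpose Q) (mat 1)"
  shows "(\<forall>p \<in> (subspherical \<gamma> :: (real^'n \<Rightarrow> real) set).
           \<exists>p' \<in> (subspherical \<gamma> :: (real^'m \<Rightarrow> real) set).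
             distr (dens_measure p) lborel (\<lambda>x. Q *v x) = dens_measure p')
       \<and> (Q ** transpose Q = mat 1 \<longrightarrow>
           (\<forall>q :: real^'n \<Rightarrow> real. is_cap \<gamma> q \<longrightarrow>
             (\<exists>q' :: real^'m \<Rightarrow> real. is_cap \<gamma> q' \<and>
                distr (dens_measure q) lborel (\<lambda>x. Q *v x) = dens_measure q')))"
  using distr_matrix_has_subspherical_density[OF assms]
    orthonormal_rows.cap_distr_matrix[OF orthonormal_rows.intro assms(1)]
  by blast

end
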